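(* Let $V\in C^3(\mathbb{R}^3)$ satisfy (U) or (U'), and fix $\varepsilon>0$. Let $(r(t),u(t))$, $t\ge0$, be a global solution of the effective equation $\dot r=u$, $m(u)\dot u=-\nabla V(r)+\varepsilon a(u)\ddot u+\varepsilon b(u,\dot u)$ such that $\sup_{t\ge0}|u(t)|\le\bar u(\varepsilon)<1$ and $\sup_{t\ge0}|\dot u(t)|\le c(\varepsilon)$ for some constants $\bar u(\varepsilon)$, $c(\varepsilon)$. Then $\dot u(t)\to0$, $\ddot u(t)\to0$ and $\nabla V(r(t))\to0$ as $t\to\infty$.
   Context: (U): $\inf V>-\infty$ and $\sup_q(|V|+|\nabla V|+|\nabla^2V|+|\nabla^3V|)<\infty$. (U'): $V(q)\to\infty$ as $|q|\to\infty$. $\rho\in C_0^\infty(\mathbb{R}^3)$ radial, $\mathsf e=\int\rho\neq0$, $\hat\rho(k)=(2\pi)^{-3/2}\int\rho e^{-ik\cdot x}$. For $|u|<1$: $\gamma=(1-|u|^2)^{-1/2}$, $m_0(u)w=\gamma w+\gamma^3(u\cdot w)u$, $m_e=\frac13\int|\hat\rho|^2|k|^{-2}dk$, $\varphi(s)=\frac{1}{2s^2(1-s^2)}-\frac{1}{4s^3}\log\frac{1+s}{1-s}$, $m_f(u)w=3m_e(\varphi(|u|)w+|u|^{-1}\varphi'(|u|)(u\cdot w)u)$, $m=m_0+m_f$, $a(u)w=\frac{\mathsf e^2}{12\pi}[\gamma^4w+4\gamma^6(u\cdot w)u]$, $b(u,w)=\frac{\mathsf e^2}{4\pi}[2\gamma^6(u\cdot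 w)w+\gamma^6|w|^2u+6\gamma^8(u\cdot w)^2u]$. *)

theory Defs
  imports "HOL-Analysis.Analysis"
begin

fun Dpart :: "'n::finite list \<Rightarrow> (real^'n \<Rightarrow> real) \<Rightarrow> real^'n \<Rightarrow> real" where
  "Dpart [] f = f"
| "Dpart (i # is) f = (\<lambda>x. deriv (\<lambda>t. Dpart is f (x + t *\<^sub>R axis i 1)) 0)"

definition Ck :: "nat \<Rightarrow> (real^'n::finite \<Rightarrow> real) \<Rightarrow> bool" where
  "Ck k f \<longleftrightarrow>
     (\<forall>is. length is \<le> k \<longrightarrow> continuous_on UNIV (Dpart is f)) \<and>
     (\<forall>is i x. length is < k \<longrightarrow>
        (\<lambda>t. Dpart is f (x + t *\<^sub>R axis i 1)) differentiable (at 0))"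

definition grad :: "(real^'n::finite \<Rightarrow> real) \<Rightarrow> real^'n \<Rightarrow> real^'n" where
  "grad f x = (\<chi> i. Dpart [i] f x)"

definition cond_U :: "(real^3 \<Rightarrow> real) \<Rightarrow> bool" where
  "cond_U V \<longleftrightarrow> bdd_below (range V) \<and>
     (\<forall>is::3 list. length is \<le> 3 \<longrightarrow> bounded (range (Dpart is V)))"

definition cond_U' :: "(real^3 \<Rightarrow> real) \<Rightarrow> bool" where
  "cond_U' V \<longleftrightarrow> filterlim V at_top at_infinity"

definition admissible_rho :: "(real^3 \<Rightarrow> real) \<Rightarrow> bool" where
  "admissible_rho \<rho> \<longleftrightarrow> (\<forall>k. Ck k \<rho>) \<and> bounded {x. \<rho> x \<noteq> 0} \<and>
     (\<forall>x y. norm x = norm y \<longrightarrow> \<rho> x = \<rho> y)"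

definition charge :: "(real^3 \<Rightarrow> real) \<Rightarrow> real" where
  "charge \<rho> = integral UNIV \<rho>"

definition rho_hat :: "(real^3 \<Rightarrow> real) \<Rightarrow> real^3 \<Rightarrow> complex" where
  "rho_hat \<rho> k = complex_of_real ((2 * pi) powr (-3/2)) *
      integral UNIV (\<lambda>x. complex_of_real (\<rho> x) * cis (- (k \<bullet> x)))"

definition m_e :: "(real^3 \<Rightarrow> real) \<Rightarrow> real" where
  "m_e \<rho> = 1/3 * integral UNIV (\<lambda>k. (cmod (rho_hat \<rho> k))\<^sup>2 / (norm k)\<^sup>2)"

definition gam :: "real^3 \<Rightarrow> real" where
  "gam u = 1 / sqrt (1 - (norm u)\<^sup>2)"

definition phi :: "real \<Rightarrow> real" where
  "phi s = 1 / (2 * s\<^sup>2 * (1 - s\<^sup>2)) - 1 / (4 * s ^ 3) * ln ((1 + s) / (1 - s))"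

definition m0 :: "real^3 \<Rightarrow> real^3 \<Rightarrow> real^3" where
  "m0 u w = gam u *\<^sub>R w + ((gam u) ^ 3 * (u \<bullet> w)) *\<^sub>R u"

(* m_f, extended continuously to u = 0 (phi(0+) = 1/3) *)
definition mf :: "(real^3 \<Rightarrow> real) \<Rightarrow> real^3 \<Rightarrow> real^3 \<Rightarrow> real^3" where
  "mf \<rho> u w = (if u = 0 then m_e \<rho> *\<^sub>R w
     else (3 * m_e \<rho>) *\<^sub>R (phi (norm u) *\<^sub>R w
            + (deriv phi (norm u) / norm u * (u \<bullet> w)) *\<^sub>R u))"

definition mass :: "(real^3 \<Rightarrow> real) \<Rightarrow> real^3 \<Rightarrow> real^3 \<Rightarrow> real^3" where
  "mass \<rho> u w = m0 u w + mf \<rho> u w"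

definition acoef :: "(real^3 \<Rightarrow> real) \<Rightarrow> real^3 \<Rightarrow> real^3 \<Rightarrow> real^3" where
  "acoef \<rho> u w = ((charge \<rho>)\<^sup>2 / (12 * pi)) *\<^sub>R
      ((gam u) ^ 4 *\<^sub>R w + (4 * (gam u) ^ 6 * (u \<bullet> w)) *\<^sub>R u)"

definition bcoef :: "(real^3 \<Rightarrow> real) \<Rightarrow> real^3 \<Rightarrow> real^3 \<Rightarrow> real^3" where
  "bcoef \<rho> u w = ((charge \<rho>)\<^sup>2 / (4 * pi)) *\<^sub>R
      ((2 * (gam u) ^ 6 * (u \<bullet> w)) *\<^sub>R w + ((gam u) ^ 6 * (norm w)\<^sup>2) *\<^sub>R u
       + (6 * (gam u) ^ 8 * (u \<bullet> w)\<^sup>2) *\<^sub>R u)"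

end

theory Submission
  imports Defs "HOL-Real_Asymp.Real_Asymp"
begin

(*
  Dotting the equation with u and using gam^2 (1 - |u|^2) = 1 shows that
    W = gam + (3 m_e / 2) Psi(|u|^2) + V(r) - eps a0 (4 gam^6 - 3 gam^4) (u . u'),
  with a0 = e^2 / (12 pi) and Psi' = psi, psi(s^2) = phi(s) + s phi'(s), satisfies
    W' = - eps a0 (gam^6 |u'|^2 + 6 gam^8 (u . u')^2) <= - eps a0 |u'|^2.
  W is bounded below; under (U') the bound on W also confines r to a ball, so in both cases the
  derivatives of V up to order two are bounded along the trajectory. As a(u) is coercive,
  w . a(u) w >= a0 |w|^2, the equation bounds u''; so u' is Lipschitz and the dissipation
  forces u' -> 0. If grad V(r) did not tend to 0, then at times where |grad V(r(t))| >= delta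
  the relation eps a(u) u'' = grad V(r) + o(1), together with the Lipschitz continuity of
  grad V(r(.)), keeps grad V(r(t)) . u'' >= kappa > 0 on an interval of fixed length, so
  grad V(r(t)) . u' grows by a fixed amount, contradicting u' -> 0. Finally u'' -> 0 by
  coercivity of a.
*)

section \<open>Differentiability from continuous partial derivatives\<close>

lemma has_real_derivative_Dpart_line:
  fixes f :: "real^'n::finite \<Rightarrow> real"
  assumes "\<And>x. (\<lambda>t. f (x + t *\<^sub>R axis i 1)) differentiable (at 0)"
  shows "((\<lambda>t. f (y + t *\<^sub>R axis i 1)) has_real_derivative Dpart [i] f (y + s *\<^sub>R axis i 1)) (at s)"
proof -
  have "((\<lambda>t. f ((y + s *\<^sub>R axis i 1) + t *\<^sub>R axis i 1))
          has_real_derivative Dpart [i] f (y + s *\<^sub>R axis i 1)) (at 0)"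
    using assms[of "y + s *\<^sub>R axis i 1"] by (simp add: DERIV_deriv_iff_real_differentiable)
  then have "((\<lambda>t. f (y + (t + s) *\<^sub>R axis i 1)) has_real_derivative Dpart [i] f (y + s *\<^sub>R axis i 1)) (at 0)"
    by (simp add: algebra_simps)
  then show ?thesis
    using DERIV_shift[of "\<lambda>t. f (y + t *\<^sub>R axis i 1)" _ 0 s] by simp
qed

lemma MVT_from_0:
  fixes g g' :: "real \<Rightarrow> real"
  assumes "\<And>t. (g has_real_derivative g' t) (at t)"
  shows "\<exists>\<theta>. \<bar>\<theta>\<bar> \<le> \<bar>s\<bar> \<and> g s - g 0 = s * g' \<theta>"
proof (cases "0::real" s rule: linorder_cases)
  case less
  from MVT2[OF less] assms obtain z where "0 < z" "z < s" "g s - g 0 = (s - 0) * g' z" by blast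
  then show ?thesis by (intro exI[of _ z]) auto
next
  case equal
  then show ?thesis by (intro exI[of _ 0]) auto
next
  case greater
  from MVT2[OF greater] assms obtain z where "s < z" "z < 0" "g 0 - g s = (0 - s) * g' z" by blast
  then show ?thesis by (intro exI[of _ z]) (auto simp: algebra_simps)
qed

definition coord_restrict :: "'n::finite set \<Rightarrow> real^'n \<Rightarrow> real^'n" where
  "coord_restrict S h = (\<chi> i. if i \<in> S then h$i else 0)"

lemma coord_restrict_insert:
  "j \<notin> S \<Longrightarrow> coord_restrict (insert j S) h = coord_restrict S h + h$j *\<^sub>R axis j 1"
  by (simp add: coord_restrict_def vec_eq_iff axis_def)

text \<open>Moving one coordinate at a time, each step is controlled by the mean value theorem.\<close>

lemma Dpart_increment_estimate:
  fixes f :: "real^'n::finite \<Rightarrow> real"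
  assumes diff: "\<And>i x. (\<lambda>t. f (x + t *\<^sub>R axis i 1)) differentiable (at 0)"
    and near: "\<And>i z. norm (z - x) < d \<Longrightarrow> \<bar>Dpart [i] f z - Dpart [i] f x\<bar> \<le> e"
    and "finite S" and h: "norm h < d"
  shows "\<bar>f (x + coord_restrict S h) - f x - (\<Sum>i\<in>S. Dpart [i] f x * h$i)\<bar> \<le> real (card S) * e * norm h"
  using \<open>finite S\<close>
proof (induction S rule: finite_induct)
  case empty
  have "coord_restrict {} h = 0" by (simp add: coord_restrict_def vec_eq_iff)
  then show ?case by simp
next
  case (insert j S)
  let ?y = "x + coord_restrict S h"
  obtain \<theta> where \<theta>: "\<bar>\<theta>\<bar> \<le> \<bar>h$j\<bar>"
    and mvt: "f (?y + h$j *\<^sub>R axis j 1) - f ?y = h$j * Dpart [j] f (?y + \<theta> *\<^sub>R axis j 1)"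
    using MVT_from_0[OF has_real_derivative_Dpart_line[OF diff], of "h$j"] by auto
  have "norm (coord_restrict S h + \<theta> *\<^sub>R axis j 1) \<le> norm h"
    by (rule norm_le_componentwise_cart) (use \<theta> insert.hyps(2) in \<open>auto simp: coord_restrict_def axis_def\<close>)
  then have "\<bar>Dpart [j] f (?y + \<theta> *\<^sub>R axis j 1) - Dpart [j] f x\<bar> \<le> e"
    using h by (intro near) (simp add: algebra_simps)
  moreover have "\<bar>h$j\<bar> \<le> norm h" by (rule component_le_norm_cart)
  ultimately have "\<bar>h$j\<bar> * \<bar>Dpart [j] f (?y + \<theta> *\<^sub>R axis j 1) - Dpart [j] f x\<bar> \<le> norm h * e"
    by (intro mult_mono) auto
  then have step: "\<bar>h$j * Dpart [j] f (?y + \<theta> *\<^sub>R axis j 1) - Dpart [j] f x * h$j\<bar> \<le> e * norm h"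
    by (simp add: abs_mult[symmetric] algebra_simps)
  have "f (x + coord_restrict (insert j S) h) - f x - (\<Sum>i\<in>insert j S. Dpart [i] f x * h$i)
      = (h$j * Dpart [j] f (?y + \<theta> *\<^sub>R axis j 1) - Dpart [j] f x * h$j)
        + (f ?y - f x - (\<Sum>i\<in>S. Dpart [i] f x * h$i))"
    using mvt insert.hyps by (simp add: coord_restrict_insert add.assoc)
  then have "\<bar>f (x + coord_restrict (insert j S) h) - f x - (\<Sum>i\<in>insert j S. Dpart [i] f x * h$i)\<bar>
      \<le> e * norm h + real (card S) * e * norm h"
    by (metis order_trans[OF abs_triangle_ineq add_mono[OF step insert.IH]])
  also have "\<dots> = real (card (insert j S)) * e * norm h"
    using insert.hyps by (simp add: algebra_simps)
  finally show ?case .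
qed

lemma has_derivative_grad:
  fixes f :: "real^'n::finite \<Rightarrow> real"
  assumes diff: "\<And>i x. (\<lambda>t. f (x + t *\<^sub>R axis i 1)) differentiable (at 0)"
    and cont: "\<And>i. continuous_on UNIV (Dpart [i] f)"
  shows "(f has_derivative (\<lambda>h. grad f x \<bullet> h)) (at x)"
  unfolding has_derivative_at_alt
proof (intro conjI allI impI)
  show "bounded_linear ((\<bullet>) (grad f x))" by (rule bounded_linear_inner_right)
  fix e :: real assume "e > 0"
  then have e': "e / CARD('n) > 0" by simp
  have "continuous_on UNIV (grad f)"
    unfolding grad_def by (intro continuous_on_vec_lambda cont)
  then have "isCont (grad f) x" by (simp add: continuous_on_eq_continuous_at)
  then obtain d where "d > 0" and d: "\<And>z. dist z x < d \<Longrightarrow> dist (grad f z) (grad f x) < e / CARD('n)"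
    using e' continuous_at_eps_delta[of x "grad f"] by blast
  have near: "\<bar>Dpart [i] f z - Dpart [i] f x\<bar> \<le> e / CARD('n)" if "norm (z - x) < d" for i z
  proof -
    have "\<bar>(grad f z - grad f x) $ i\<bar> \<le> norm (grad f z - grad f x)" by (rule component_le_norm_cart)
    also have "\<dots> < e / CARD('n)" using d[of z] that by (simp add: dist_norm)
    finally show ?thesis by (simp add: grad_def)
  qed
  show "\<exists>d>0. \<forall>y. norm (y - x) < d \<longrightarrow> norm (f y - f x - grad f x \<bullet> (y - x)) \<le> e * norm (y - x)"
  proof (intro exI[of _ d] conjI allI impI \<open>d > 0\<close>)
    fix y assume "norm (y - x) < d"
    from Dpart_increment_estimate[OF diff near _ this, of UNIV]
    have "\<bar>f (x + coord_restrict UNIV (y - x)) - f x - (\<Sum>i\<in>UNIV. Dpart [i] f x * (y - x)$i)\<bar>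
        \<le> e * norm (y - x)"
      by simp
    moreover have "coord_restrict UNIV (y - x) = y - x" by (simp add: coord_restrict_def vec_eq_iff)
    ultimately show "norm (f y - f x - grad f x \<bullet> (y - x)) \<le> e * norm (y - x)"
      by (simp add: inner_vec_def grad_def)
  qed
qed

lemma Ck_has_derivative_grad:
  assumes "Ck k f" "length is < k"
  shows "(Dpart is f has_derivative (\<lambda>h. grad (Dpart is f) x \<bullet> h)) (at x)"
proof (rule has_derivative_grad)
  show "(\<lambda>t. Dpart is f (y + t *\<^sub>R axis i 1)) differentiable (at 0)" for i y
    using assms unfolding Ck_def by blast
  show "continuous_on UNIV (Dpart [i] (Dpart is f))" for i
  proof -
    have "length (i # is) \<le> k" using assms(2) by simp
    then have "continuous_on UNIV (Dpart (i # is) f)" using assms(1) unfolding Ck_def by blast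
    then show ?thesis by simp
  qed
qed

lemma bounded_grad_if_bounded_Dpart:
  fixes f :: "real^'n::finite \<Rightarrow> real"
  assumes "\<And>i. \<exists>B. \<forall>x\<in>S. \<bar>Dpart [i] f x\<bar> \<le> B"
  shows "\<exists>B. \<forall>x\<in>S. norm (grad f x) \<le> B"
proof -
  obtain B where B: "\<And>i x. x \<in> S \<Longrightarrow> \<bar>Dpart [i] f x\<bar> \<le> B i" using assms by metis
  have "norm (grad f x) \<le> (\<Sum>i\<in>UNIV. B i)" if "x \<in> S" for x
    using norm_le_l1_cart[of "grad f x"] sum_mono[of UNIV "\<lambda>i. \<bar>grad f x $ i\<bar>" B] B[OF that]
    by (simp add: grad_def)
  then show ?thesis by blast
qed

lemma has_real_derivative_inner:
  assumes "(f has_vector_derivative f') (at t within S)" "(g has_vector_derivative g') (at t within S)"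
  shows "((\<lambda>t. f t \<bullet> g t) has_real_derivative f t \<bullet> g' + f' \<bullet> g t) (at t within S)"
proof -
  have "((\<lambda>t. f t \<bullet> g t) has_derivative (\<lambda>h. f t \<bullet> (h *\<^sub>R g') + (h *\<^sub>R f') \<bullet> g t)) (at t within S)"
    using has_derivative_inner[OF assms[unfolded has_vector_derivative_def]] .
  then show ?thesis unfolding has_field_derivative_def
    by (rule has_derivative_eq_rhs) (auto simp: fun_eq_iff algebra_simps)
qed

lemma has_real_derivative_comp_grad:
  assumes "(f has_vector_derivative f') (at t within S)" "(g has_derivative (\<lambda>h. G \<bullet> h)) (at (f t))"
  shows "((\<lambda>t. g (f t)) has_real_derivative G \<bullet> f') (at t within S)"
  using vector_derivative_diff_chain_within[OF assms(1) has_derivative_at_withinI[OF assms(2)]]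
  by (simp add: has_real_derivative_iff_has_vector_derivative o_def)

lemma decrease_if_derivative_le:
  fixes f f' :: "real \<Rightarrow> real"
  assumes "a \<le> b"
    and "\<And>t. t \<in> {a..b} \<Longrightarrow> (f has_real_derivative f' t) (at t within {a..b})"
    and "\<And>t. t \<in> {a..b} \<Longrightarrow> f' t \<le> - k"
  shows "f b \<le> f a - k * (b - a)"
proof -
  obtain z where "z \<in> {a..b}" "f b - f a = (b - a) * f' z"
    using mvt_very_simple[OF \<open>a \<le> b\<close>, of f "\<lambda>t. (*) (f' t)"] assms(2)
    by (auto simp: has_field_derivative_def mult.commute)
  moreover have "(b - a) * f' z \<le> (b - a) * (- k)"
    using assms(1,3) \<open>z \<in> {a..b}\<close> by (intro mult_left_mono) auto
  ultimately show ?thesis by (simp add: algebra_simps)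
qed

lemma norm_diff_le_derivative_bound:
  fixes f :: "real \<Rightarrow> 'a::real_normed_vector"
  assumes "convex S"
    and "\<And>t. t \<in> S \<Longrightarrow> (f has_vector_derivative f' t) (at t within S)"
    and "\<And>t. t \<in> S \<Longrightarrow> norm (f' t) \<le> B" and "s \<in> S" "t \<in> S"
  shows "norm (f t - f s) \<le> B * \<bar>t - s\<bar>"
proof -
  have "norm (f t - f s) \<le> B * norm (t - s)"
  proof (rule differentiable_bound[OF assms(1) _ _ assms(5,4)])
    show "(f has_derivative (\<lambda>h. h *\<^sub>R f' x)) (at x within S)" if "x \<in> S" for x
      using assms(2)[OF that] by (simp add: has_vector_derivative_def)
    show "onorm (\<lambda>h. h *\<^sub>R f' x) \<le> B" if "x \<in> S" for x
    proof (rule onorm_le)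
      fix h :: real
      have "\<bar>h\<bar> * norm (f' x) \<le> \<bar>h\<bar> * B" using assms(3)[OF that] by (intro mult_left_mono) auto
      then show "norm (h *\<^sub>R f' x) \<le> B * norm h" by (simp add: mult.commute)
    qed
  qed
  then show ?thesis by simp
qed

lemma mult_div_twice_succ_le:
  fixes K x :: real
  assumes "0 \<le> K" "0 \<le> x"
  shows "K * (x / (2 * (K + 1))) \<le> x / 2"
proof -
  have "K * (x / (2 * (K + 1))) = x / 2 * (K / (K + 1))" using assms by (simp add: field_simps)
  also have "\<dots> \<le> x / 2 * 1" using assms by (intro mult_left_mono) auto
  finally show ?thesis by simp
qed

lemma not_tendsto_0_frequently:
  fixes f :: "real \<Rightarrow> 'a::real_normed_vector"
  assumes "\<not> (f \<longlongrightarrow> 0) at_top"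
  shows "\<exists>\<delta>>0. \<forall>T. \<exists>t\<ge>T. \<delta> \<le> norm (f t)"
proof -
  obtain \<delta> where "\<delta> > 0" and "\<not> eventually (\<lambda>t. norm (f t) < \<delta>) at_top"
    using assms unfolding tendsto_iff by auto
  then show ?thesis unfolding eventually_at_top_linorder by (meson not_le)
qed

lemma not_bdd_below_if_repeated_drop:
  fixes W :: "real \<Rightarrow> real"
  assumes "\<kappa> > 0" and drop: "\<And>T. T \<ge> 0 \<Longrightarrow> \<exists>T'\<ge>T. W T' \<le> W T - \<kappa>"
  shows "\<not> bdd_below (W ` {0..})"
proof
  assume "bdd_below (W ` {0..})"
  then obtain Wl where Wl: "\<And>t. t \<ge> 0 \<Longrightarrow> Wl \<le> W t" by (auto simp: bdd_below_def)
  have "\<exists>T\<ge>0. W T \<le> W 0 - real n * \<kappa>" for n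
  proof (induction n)
    case (Suc n)
    then obtain T where "T \<ge> 0" "W T \<le> W 0 - real n * \<kappa>" by blast
    with drop obtain T' where "T' \<ge> T" "W T' \<le> W T - \<kappa>" by blast
    with \<open>T \<ge> 0\<close> \<open>W T \<le> W 0 - real n * \<kappa>\<close> show ?case
      by (intro exI[of _ T']) (auto simp: algebra_simps)
  qed (auto intro: exI[of _ 0])
  moreover obtain n where "W 0 - Wl < real n * \<kappa>" using ex_less_of_nat_mult[OF \<open>\<kappa> > 0\<close>] by blast
  ultimately show False using Wl by (smt (verit))
qed

lemma inner_ge_if_coercive:
  fixes v w y :: "'a::real_inner"
  assumes "\<alpha> > 0" "\<beta> > 0" "\<delta> > 0"
    and coercive: "\<alpha> * (norm w)\<^sup>2 \<le> w \<bullet> y" and bounded: "norm y \<le> \<beta> * norm w"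
    and close: "norm (y - v) \<le> \<eta>" and "\<delta> \<le> norm v" and "\<eta> \<le> \<delta> / 2" and "\<eta> \<le> \<alpha> * \<delta> / (4 * \<beta>)"
  shows "\<alpha> * \<delta>\<^sup>2 / (8 * \<beta>\<^sup>2) \<le> v \<bullet> w"
proof -
  have "\<delta> / 2 \<le> norm y" using close \<open>\<delta> \<le> norm v\<close> \<open>\<eta> \<le> \<delta> / 2\<close> norm_triangle_ineq3[of y v] by linarith
  then have w: "\<delta> / (2 * \<beta>) \<le> norm w" using bounded \<open>\<beta> > 0\<close> by (simp add: field_simps)
  then have "\<alpha> * (\<delta> / (2 * \<beta>)) \<le> \<alpha> * norm w" using \<open>\<alpha> > 0\<close> by (intro mult_left_mono) auto
  moreover have "\<alpha> * (\<delta> / (2 * \<beta>)) = 2 * (\<alpha> * \<delta> / (4 * \<beta>))" by simp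
  ultimately have "\<alpha> * \<delta> / (4 * \<beta>) \<le> \<alpha> * norm w - \<eta>" using \<open>\<eta> \<le> \<alpha> * \<delta> / (4 * \<beta>)\<close> by linarith
  moreover have "0 \<le> \<alpha> * \<delta> / (4 * \<beta>)" using assms(1-3) by simp
  ultimately have "\<delta> / (2 * \<beta>) * (\<alpha> * \<delta> / (4 * \<beta>)) \<le> norm w * (\<alpha> * norm w - \<eta>)"
    using w by (intro mult_mono) auto
  also have "\<dots> \<le> w \<bullet> y - w \<bullet> (y - v)"
  proof -
    have "w \<bullet> (y - v) \<le> norm w * \<eta>"
      using Cauchy_Schwarz_ineq2[of w "y - v"] mult_left_mono[OF close norm_ge_zero[of w]] by linarith
    then show ?thesis using coercive by (simp add: power2_eq_square algebra_simps)
  qed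
  also have "\<dots> = v \<bullet> w" by (simp add: inner_diff_right inner_commute)
  finally show ?thesis by (simp add: power2_eq_square mult.left_commute)
qed

section \<open>The function phi\<close>

definition dphi :: "real \<Rightarrow> real" where
  "dphi s = (5 * s\<^sup>2 - 3) / (2 * s ^ 3 * (1 - s\<^sup>2)\<^sup>2) + 3 * ln ((1 + s) / (1 - s)) / (4 * s ^ 4)"

lemma has_real_derivative_ln_ratio:
  assumes "\<bar>s\<bar> < 1"
  shows "((\<lambda>s. ln ((1 + s) / (1 - s))) has_real_derivative 2 / (1 - s\<^sup>2)) (at s)"
proof -
  have ne: "1 - s \<noteq> 0" "1 + s \<noteq> 0" using assms by auto
  have "((\<lambda>s. (1 + s) / (1 - s)) has_real_derivative 2 / ((1 - s) * (1 - s))) (at s)"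
    using ne by (auto intro!: derivative_eq_intros simp: field_simps)
  from DERIV_chain2[OF DERIV_ln_divide this]
  have deriv: "((\<lambda>s. ln ((1 + s) / (1 - s)))
      has_real_derivative 1 / ((1 + s) / (1 - s)) * (2 / ((1 - s) * (1 - s)))) (at s)"
    using assms by simp
  have factor: "1 - s\<^sup>2 = (1 - s) * (1 + s)" by (simp add: algebra_simps power2_eq_square)
  have ratio: "1 / (b / a) * (2 / (a * a)) = 2 / (a * b)" if "a \<noteq> 0" "b \<noteq> 0" for a b :: real
    using that by (simp add: field_simps)
  have "1 / ((1 + s) / (1 - s)) * (2 / ((1 - s) * (1 - s))) = 2 / (1 - s\<^sup>2)"
    unfolding factor using ratio ne by blast
  with deriv show ?thesis by simp
qed

lemma has_real_derivative_phi:
  assumes "0 < s" "s < 1"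
  shows "(phi has_real_derivative dphi s) (at s)"
proof -
  have "s\<^sup>2 < 1" using assms by (simp add: abs_square_less_1)
  then have ne: "1 - s\<^sup>2 \<noteq> 0" "s \<noteq> 0" using assms by auto
  have "((\<lambda>s. 2 * s\<^sup>2 * (1 - s\<^sup>2)) has_real_derivative 4 * s * (1 - 2 * s\<^sup>2)) (at s)"
    by (auto intro!: derivative_eq_intros simp: algebra_simps power2_eq_square power3_eq_cube)
  from DERIV_inverse_fun[OF this] have inv: "((\<lambda>s. inverse (2 * s\<^sup>2 * (1 - s\<^sup>2)))
      has_real_derivative - (4 * s * (1 - 2 * s\<^sup>2) * inverse ((2 * s\<^sup>2 * (1 - s\<^sup>2)) ^ Suc (Suc 0)))) (at s)"
    using ne by simp
  have eq: "- (4 * s * (1 - 2 * s\<^sup>2) * inverse ((2 * s\<^sup>2 * q) ^ Suc (Suc 0))) = (2 * s\<^sup>2 - 1) / (s ^ 3 * q\<^sup>2)"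
    if "q \<noteq> 0" for q
    using ne that by (simp add: field_simps power2_eq_square power3_eq_cube)
  have "((\<lambda>s. 1 / (2 * s\<^sup>2 * (1 - s\<^sup>2)))
      has_real_derivative (2 * s\<^sup>2 - 1) / (s ^ 3 * (1 - s\<^sup>2)\<^sup>2)) (at s)"
    using inv unfolding eq[OF ne(1)] by (simp only: inverse_eq_divide)
  moreover have "((\<lambda>s. 1 / (4 * s ^ 3)) has_real_derivative - 3 / (4 * s ^ 4)) (at s)"
    using ne by (auto intro!: derivative_eq_intros simp: field_simps power2_eq_square power3_eq_cube power4_eq_xxxx)
  moreover have "((\<lambda>s. ln ((1 + s) / (1 - s))) has_real_derivative 2 / (1 - s\<^sup>2)) (at s)"
    using assms by (intro has_real_derivative_ln_ratio) auto
  ultimately have "(phi has_real_derivative (2 * s\<^sup>2 - 1) / (s ^ 3 * (1 - s\<^sup>2)\<^sup>2)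
      - (- 3 / (4 * s ^ 4) * ln ((1 + s) / (1 - s)) + 2 / (1 - s\<^sup>2) * (1 / (4 * s ^ 3)))) (at s)"
    unfolding phi_def[abs_def] by (intro DERIV_diff DERIV_mult)
  moreover have combine: "(2 * s\<^sup>2 - 1) / (s ^ 3 * q\<^sup>2) - (- 3 / (4 * s ^ 4) * L + 2 / q * (1 / (4 * s ^ 3)))
      = (2 * (2 * s\<^sup>2 - 1) - q) / (2 * s ^ 3 * q\<^sup>2) + 3 * L / (4 * s ^ 4)" if "q \<noteq> 0" for q L
    using that ne by (simp add: field_simps power2_eq_square power3_eq_cube power4_eq_xxxx)
  moreover have "2 * (2 * s\<^sup>2 - 1) - (1 - s\<^sup>2) = 5 * s\<^sup>2 - 3" by simp
  ultimately show ?thesis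
    unfolding dphi_def combine[OF ne(1)] by simp
qed

lemma deriv_phi: "0 < s \<Longrightarrow> s < 1 \<Longrightarrow> deriv phi s = dphi s"
  by (rule DERIV_imp_deriv[OF has_real_derivative_phi])

lemma continuous_on_phi: "continuous_on {0<..<1} phi"
  unfolding phi_def[abs_def]
proof (intro continuous_intros ballI)
  fix x :: real assume "x \<in> {0<..<1}"
  then have x: "0 < x" "x < 1" "x\<^sup>2 < 1" by (auto simp: abs_square_less_1)
  show "2 * x\<^sup>2 * (1 - x\<^sup>2) \<noteq> 0" using x by auto
  show "4 * x ^ 3 \<noteq> 0" "1 - x \<noteq> 0" "(1 + x) / (1 - x) \<noteq> 0" using x by auto
qed

lemma continuous_on_dphi: "continuous_on {0<..<1} dphi"
  unfolding dphi_def[abs_def]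
proof (intro continuous_intros ballI)
  fix x :: real assume "x \<in> {0<..<1}"
  then have x: "0 < x" "x < 1" "x\<^sup>2 < 1" by (auto simp: abs_square_less_1)
  show "2 * x ^ 3 * (1 - x\<^sup>2)\<^sup>2 \<noteq> 0" using x by auto
  show "4 * x ^ 4 \<noteq> 0" "1 - x \<noteq> 0" "(1 + x) / (1 - x) \<noteq> 0" using x by auto
qed

lemma phi_tendsto_at_right_0: "(phi \<longlongrightarrow> 1/3) (at_right 0)"
  unfolding phi_def[abs_def] by real_asymp

lemma dphi_div_tendsto_at_right_0: "((\<lambda>s. dphi s / s) \<longlongrightarrow> 4/5) (at_right 0)"
  unfolding dphi_def[abs_def] by real_asymp

lemma bounded_Ioc_if_tendsto_at_right_0:
  fixes f :: "real \<Rightarrow> real"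
  assumes lim: "(f \<longlongrightarrow> L) (at_right 0)" and cont: "continuous_on {0<..<1} f" and "b < 1"
  shows "\<exists>B. \<forall>s\<in>{0<..b}. \<bar>f s\<bar> \<le> B"
proof -
  obtain d where "d > 0" and d: "\<And>s. 0 < s \<Longrightarrow> s < d \<Longrightarrow> dist (f s) L < 1"
    using tendstoD[OF lim zero_less_one] unfolding eventually_at_right_field by auto
  have "compact (f ` {d/2..b})"
    by (intro compact_continuous_image continuous_on_subset[OF cont]) (use \<open>d > 0\<close> \<open>b < 1\<close> in auto)
  then obtain B where B: "\<And>s. s \<in> {d/2..b} \<Longrightarrow> \<bar>f s\<bar> \<le> B"
    using compact_imp_bounded bounded_real by (metis imageI)
  have "\<bar>f s\<bar> \<le> max B (\<bar>L\<bar> + 1)" if "s \<in> {0<..b}" for s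
  proof (cases "s < d")
    case True
    then show ?thesis using d[of s] that by (auto simp: dist_real_def)
  next
    case False
    then show ?thesis using B[of s] that \<open>d > 0\<close> by auto
  qed
  then show ?thesis by blast
qed

section \<open>The coefficients of the effective equation\<close>

lemma norm_squared_less_1: "norm u < 1 \<Longrightarrow> (norm u)\<^sup>2 < 1"
  using mult_strict_mono[of "norm u" 1 "norm u" 1] by (simp add: power2_eq_square)

lemma gam_ge_1: "norm u < 1 \<Longrightarrow> 1 \<le> gam u"
  using norm_squared_less_1[of u] unfolding gam_def by simp

lemma gam_le:
  assumes "norm u \<le> ub" "ub < 1"
  shows "gam u \<le> 1 / sqrt (1 - ub\<^sup>2)"
proof -
  have "0 \<le> ub" using assms(1) norm_ge_zero order_trans by blast
  then have "(norm u)\<^sup>2 \<le> ub\<^sup>2" "ub\<^sup>2 < 1"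
    using assms by (auto intro: power_mono simp: abs_square_less_1)
  then show ?thesis unfolding gam_def by (simp add: frac_le)
qed

lemma gam_power_le:
  assumes "norm u \<le> ub" "ub < 1"
  shows "gam u ^ n \<le> (1 / sqrt (1 - ub\<^sup>2)) ^ n"
  using assms gam_ge_1[of u] by (intro power_mono gam_le) auto

lemma gam_squared: "norm u < 1 \<Longrightarrow> (gam u)\<^sup>2 * (1 - (norm u)\<^sup>2) = 1"
  using norm_squared_less_1[of u] unfolding gam_def by (simp add: power_divide)

lemma has_real_derivative_gam_comp:
  assumes u: "(u has_vector_derivative u') (at t within S)" and "norm (u t) < 1"
  shows "((\<lambda>t. gam (u t)) has_real_derivative gam (u t) ^ 3 * (u t \<bullet> u')) (at t within S)"
proof -
  have pos: "0 < 1 - u t \<bullet> u t"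
    using norm_squared_less_1[OF assms(2)] by (simp add: power2_norm_eq_inner)
  have "((\<lambda>t. 1 - u t \<bullet> u t) has_real_derivative - 2 * (u t \<bullet> u')) (at t within S)"
    using has_real_derivative_inner[OF u u] by (auto intro!: derivative_eq_intros simp: inner_commute)
  from DERIV_inverse_fun[OF DERIV_chain2[OF DERIV_real_sqrt[OF pos] this]]
  have "((\<lambda>t. inverse (sqrt (1 - u t \<bullet> u t))) has_real_derivative
      - (inverse (sqrt (1 - u t \<bullet> u t)) / 2 * (- 2 * (u t \<bullet> u')) * inverse (sqrt (1 - u t \<bullet> u t) ^ Suc (Suc 0))))
      (at t within S)"
    using pos by simp
  moreover have "- (inverse (sqrt (1 - u t \<bullet> u t)) / 2 * (- 2 * (u t \<bullet> u')) * inverse (sqrt (1 - u t \<bullet> u t) ^ Suc (Suc 0)))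
      = (1 / sqrt (1 - u t \<bullet> u t)) ^ 3 * (u t \<bullet> u')"
    by (simp add: field_simps power3_eq_cube)
  ultimately show ?thesis
    by (simp add: gam_def power2_norm_eq_inner inverse_eq_divide)
qed

lemma norm_add_inner_scaleR_le:
  fixes u w :: "'a::real_inner"
  assumes "norm u \<le> 1"
  shows "norm (a *\<^sub>R w + (b * (u \<bullet> w)) *\<^sub>R u) \<le> (\<bar>a\<bar> + \<bar>b\<bar>) * norm w"
proof -
  have "\<bar>u \<bullet> w\<bar> \<le> norm u * norm w" by (rule Cauchy_Schwarz_ineq2)
  also have "\<dots> \<le> norm w" using assms by (simp add: mult_left_le_one_le)
  finally have "\<bar>u \<bullet> w\<bar> * norm u \<le> norm w * 1" using assms by (intro mult_mono) auto
  then have "\<bar>b\<bar> * (\<bar>u \<bullet> w\<bar> * norm u) \<le> \<bar>b\<bar> * norm w" by (simp add: mult_left_mono)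
  then show ?thesis
    using norm_triangle_ineq[of "a *\<^sub>R w" "(b * (u \<bullet> w)) *\<^sub>R u"]
    by (simp add: abs_mult algebra_simps)
qed

lemma mass_bounded:
  assumes "ub < 1"
  shows "\<exists>M. \<forall>u w. norm u \<le> ub \<longrightarrow> norm (mass \<rho> u w) \<le> M * norm w"
proof -
  obtain P where P: "\<And>s. s \<in> {0<..ub} \<Longrightarrow> \<bar>phi s\<bar> \<le> P"
    using bounded_Ioc_if_tendsto_at_right_0[OF phi_tendsto_at_right_0 continuous_on_phi assms] by blast
  have "continuous_on {0<..<1} (\<lambda>s. dphi s / s)"
    by (intro continuous_intros continuous_on_dphi) auto
  then obtain Q where Q: "\<And>s. s \<in> {0<..ub} \<Longrightarrow> \<bar>dphi s / s\<bar> \<le> Q"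
    using bounded_Ioc_if_tendsto_at_right_0[OF dphi_div_tendsto_at_right_0 _ assms] by blast
  define g where "g = 1 / sqrt (1 - ub\<^sup>2)"
  have "norm (mass \<rho> u w) \<le> (g + g ^ 3 + 3 * \<bar>m_e \<rho>\<bar> * (\<bar>P\<bar> + \<bar>Q\<bar>) + \<bar>m_e \<rho>\<bar>) * norm w"
    if u: "norm u \<le> ub" for u w :: "real^3"
  proof -
    have "norm u \<le> 1" using u assms by simp
    have "gam u \<le> g" "gam u ^ 3 \<le> g ^ 3"
      using gam_power_le[OF u assms, of 1] gam_power_le[OF u assms, of 3] by (simp_all add: g_def)
    moreover have "0 \<le> gam u" using gam_ge_1[of u] u assms by simp
    ultimately have "(\<bar>gam u\<bar> + \<bar>gam u ^ 3\<bar>) * norm w \<le> (g + g ^ 3) * norm w"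
      by (intro mult_right_mono add_mono) auto
    then have m0: "norm (m0 u w) \<le> (g + g ^ 3) * norm w"
      using norm_add_inner_scaleR_le[OF \<open>norm u \<le> 1\<close>, of "gam u" w "gam u ^ 3"]
      unfolding m0_def by linarith
    have mf: "norm (mf \<rho> u w) \<le> (3 * \<bar>m_e \<rho>\<bar> * (\<bar>P\<bar> + \<bar>Q\<bar>) + \<bar>m_e \<rho>\<bar>) * norm w"
    proof (cases "u = 0")
      case True
      then show ?thesis by (simp add: mf_def algebra_simps)
    next
      case False
      then have s: "norm u \<in> {0<..ub}" using u by simp
      then have "deriv phi (norm u) = dphi (norm u)" using assms by (intro deriv_phi) auto
      then have "norm (mf \<rho> u w) \<le> \<bar>3 * m_e \<rho>\<bar> * ((\<bar>phi (norm u)\<bar> + \<bar>dphi (norm u) / norm u\<bar>) * norm w)"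
        using False norm_add_inner_scaleR_le[OF \<open>norm u \<le> 1\<close>, of "phi (norm u)" w "dphi (norm u) / norm u"]
        by (simp add: mf_def mult_left_mono)
      also have "\<dots> \<le> \<bar>3 * m_e \<rho>\<bar> * ((\<bar>P\<bar> + \<bar>Q\<bar>) * norm w)"
        using P[OF s] Q[OF s] by (intro mult_left_mono mult_right_mono add_mono) auto
      finally have "norm (mf \<rho> u w) \<le> 3 * \<bar>m_e \<rho>\<bar> * (\<bar>P\<bar> + \<bar>Q\<bar>) * norm w"
        by (simp add: abs_mult algebra_simps)
      moreover have "0 \<le> \<bar>m_e \<rho>\<bar> * norm w" by simp
      ultimately show ?thesis unfolding distrib_right by linarith
    qed
    show ?thesis
      using norm_triangle_ineq[of "m0 u w" "mf \<rho> u w"] m0 mf by (simp add: mass_def algebra_simps)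
  qed
  then show ?thesis by blast
qed

definition acoef_scale :: "(real^3 \<Rightarrow> real) \<Rightarrow> real" where
  "acoef_scale \<rho> = (charge \<rho>)\<^sup>2 / (12 * pi)"

lemma acoef_scale_pos: "charge \<rho> \<noteq> 0 \<Longrightarrow> 0 < acoef_scale \<rho>"
  unfolding acoef_scale_def by simp

lemma inner_acoef: "v \<bullet> acoef \<rho> v w = acoef_scale \<rho> * (gam v ^ 4 * (v \<bullet> w) + 4 * gam v ^ 6 * (v \<bullet> w) * (v \<bullet> v))"
  by (simp add: acoef_def acoef_scale_def algebra_simps)

lemma inner_acoef_ge:
  assumes "norm u < 1"
  shows "acoef_scale \<rho> * (norm w)\<^sup>2 \<le> w \<bullet> acoef \<rho> u w"
proof -
  have "1 \<le> gam u ^ 4" using gam_ge_1[OF assms] by simp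
  then have "(norm w)\<^sup>2 \<le> gam u ^ 4 * (norm w)\<^sup>2" by (simp add: mult_le_cancel_right1)
  moreover have "0 \<le> 4 * gam u ^ 6 * (u \<bullet> w)\<^sup>2" using gam_ge_1[OF assms] by simp
  ultimately have "(norm w)\<^sup>2 \<le> gam u ^ 4 * (norm w)\<^sup>2 + 4 * gam u ^ 6 * (u \<bullet> w)\<^sup>2" by linarith
  then have "acoef_scale \<rho> * (norm w)\<^sup>2
      \<le> acoef_scale \<rho> * (gam u ^ 4 * (norm w)\<^sup>2 + 4 * gam u ^ 6 * (u \<bullet> w)\<^sup>2)"
    by (intro mult_left_mono) (simp_all add: acoef_scale_def)
  also have "\<dots> = w \<bullet> acoef \<rho> u w"
    unfolding acoef_def acoef_scale_def
    by (simp add: power2_eq_square inner_commute algebra_simps flip: power2_norm_eq_inner)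
  finally show ?thesis .
qed

lemma norm_acoef_ge:
  assumes "norm u < 1"
  shows "acoef_scale \<rho> * norm w \<le> norm (acoef \<rho> u w)"
proof (cases "w = 0")
  case False
  have "acoef_scale \<rho> * (norm w)\<^sup>2 \<le> norm w * norm (acoef \<rho> u w)"
    using inner_acoef_ge[OF assms] norm_cauchy_schwarz order_trans by blast
  then show ?thesis using False by (simp add: power2_eq_square algebra_simps)
qed simp

lemma acoef_bounded:
  assumes "ub < 1"
  shows "\<exists>A. \<forall>u w. norm u \<le> ub \<longrightarrow> norm (acoef \<rho> u w) \<le> A * norm w"
proof -
  define g where "g = 1 / sqrt (1 - ub\<^sup>2)"
  have "norm (acoef \<rho> u w) \<le> acoef_scale \<rho> * (g ^ 4 + 4 * g ^ 6) * norm w"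
    if u: "norm u \<le> ub" for u w :: "real^3"
  proof -
    have "gam u ^ 4 \<le> g ^ 4" "gam u ^ 6 \<le> g ^ 6" "0 \<le> gam u"
      using gam_power_le[OF u assms] gam_ge_1[of u] u assms by (simp_all add: g_def)
    then have "(\<bar>gam u ^ 4\<bar> + \<bar>4 * gam u ^ 6\<bar>) * norm w \<le> (g ^ 4 + 4 * g ^ 6) * norm w"
      by (intro mult_right_mono) auto
    then have "norm (gam u ^ 4 *\<^sub>R w + (4 * gam u ^ 6 * (u \<bullet> w)) *\<^sub>R u) \<le> (g ^ 4 + 4 * g ^ 6) * norm w"
      using norm_add_inner_scaleR_le[of u "gam u ^ 4" w "4 * gam u ^ 6"] u assms by simp
    then have "acoef_scale \<rho> * norm (gam u ^ 4 *\<^sub>R w + (4 * gam u ^ 6 * (u \<bullet> w)) *\<^sub>R u)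
        \<le> acoef_scale \<rho> * ((g ^ 4 + 4 * g ^ 6) * norm w)"
      by (rule mult_left_mono) (simp add: acoef_scale_def)
    then show ?thesis by (simp add: acoef_def acoef_scale_def mult.assoc)
  qed
  then show ?thesis by blast
qed

lemma inner_bcoef:
  "v \<bullet> bcoef \<rho> v w = 3 * acoef_scale \<rho> * (2 * gam v ^ 6 * (v \<bullet> w)\<^sup>2 + gam v ^ 6 * (w \<bullet> w) * (v \<bullet> v)
      + 6 * gam v ^ 8 * (v \<bullet> w)\<^sup>2 * (v \<bullet> v))"
  by (simp add: bcoef_def acoef_scale_def algebra_simps power2_eq_square
      flip: power2_norm_eq_inner)

lemma bcoef_bounded:
  assumes "ub < 1"
  shows "\<exists>B. \<forall>u w. norm u \<le> ub \<longrightarrow> norm (bcoef \<rho> u w) \<le> B * (norm w)\<^sup>2"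
proof -
  define g where "g = 1 / sqrt (1 - ub\<^sup>2)"
  define k where "k = (charge \<rho>)\<^sup>2 / (4 * pi)"
  have "norm (bcoef \<rho> u w) \<le> k * (3 * g ^ 6 + 6 * g ^ 8) * (norm w)\<^sup>2"
    if u: "norm u \<le> ub" for u w :: "real^3"
  proof -
    let ?b = "(2 * gam u ^ 6 * (u \<bullet> w)) *\<^sub>R w + (gam u ^ 6 * (norm w)\<^sup>2) *\<^sub>R u
      + (6 * gam u ^ 8 * (u \<bullet> w)\<^sup>2) *\<^sub>R u"
    have g: "gam u ^ 6 \<le> g ^ 6" "gam u ^ 8 \<le> g ^ 8" "0 \<le> gam u"
      using gam_power_le[OF u assms] gam_ge_1[of u] u assms by (simp_all add: g_def)
    have "norm u \<le> 1" using u assms by simp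
    then have "norm u * norm w \<le> norm w" by (simp add: mult_left_le_one_le)
    then have uw: "\<bar>u \<bullet> w\<bar> \<le> norm w" using Cauchy_Schwarz_ineq2[of u w] by linarith
    then have uw2: "(u \<bullet> w)\<^sup>2 \<le> (norm w)\<^sup>2" using power_mono[OF uw, of 2] by simp
    have t1: "norm ((2 * gam u ^ 6 * (u \<bullet> w)) *\<^sub>R w) \<le> 2 * g ^ 6 * (norm w)\<^sup>2"
      using g uw by (simp add: abs_mult power2_eq_square mult_mono)
    have "gam u ^ 6 * ((norm w)\<^sup>2 * norm u) \<le> g ^ 6 * ((norm w)\<^sup>2 * 1)"
      using g \<open>norm u \<le> 1\<close> by (intro mult_mono mult_left_mono) auto
    then have t2: "norm ((gam u ^ 6 * (norm w)\<^sup>2) *\<^sub>R u) \<le> g ^ 6 * (norm w)\<^sup>2"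
      using g by (simp add: abs_mult mult.assoc)
    have "gam u ^ 8 * ((u \<bullet> w)\<^sup>2 * norm u) \<le> g ^ 8 * ((norm w)\<^sup>2 * 1)"
      using g uw2 \<open>norm u \<le> 1\<close> by (intro mult_mono) auto
    then have t3: "norm ((6 * gam u ^ 8 * (u \<bullet> w)\<^sup>2) *\<^sub>R u) \<le> 6 * g ^ 8 * (norm w)\<^sup>2"
      using g by (simp add: abs_mult mult.assoc)
    have "norm ?b \<le> norm ((2 * gam u ^ 6 * (u \<bullet> w)) *\<^sub>R w) + norm ((gam u ^ 6 * (norm w)\<^sup>2) *\<^sub>R u)
         + norm ((6 * gam u ^ 8 * (u \<bullet> w)\<^sup>2) *\<^sub>R u)"
      by (rule order_trans[OF norm_triangle_ineq add_right_mono[OF norm_triangle_ineq]])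
    also have "\<dots> \<le> 2 * g ^ 6 * (norm w)\<^sup>2 + g ^ 6 * (norm w)\<^sup>2 + 6 * g ^ 8 * (norm w)\<^sup>2"
      using t1 t2 t3 by linarith
    also have "\<dots> = (3 * g ^ 6 + 6 * g ^ 8) * (norm w)\<^sup>2" by (simp add: algebra_simps)
    finally have "k * norm ?b \<le> k * ((3 * g ^ 6 + 6 * g ^ 8) * (norm w)\<^sup>2)"
      by (rule mult_left_mono) (simp add: k_def)
    then show ?thesis by (simp add: bcoef_def k_def mult.assoc)
  qed
  then show ?thesis by blast
qed

section \<open>The energy\<close>

definition psi :: "real \<Rightarrow> real" where
  "psi y = (if y = 0 then 1/3 else phi (sqrt y) + sqrt y * dphi (sqrt y))"

lemma psi_tendsto_at_right_0: "(psi \<longlongrightarrow> 1/3) (at_right 0)"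
proof -
  have "((\<lambda>y. phi (sqrt y) + sqrt y * dphi (sqrt y)) \<longlongrightarrow> 1/3) (at_right 0)"
    unfolding phi_def dphi_def by real_asymp
  moreover have "eventually (\<lambda>y. phi (sqrt y) + sqrt y * dphi (sqrt y) = psi y) (at_right 0)"
    using eventually_at_right_less[of "0::real"] by eventually_elim (auto simp: psi_def)
  ultimately show ?thesis using Lim_transform_eventually by blast
qed

lemma isCont_psi:
  assumes "0 < y" "y < 1"
  shows "isCont psi y"
proof -
  have "sqrt ` {0<..<1} \<subseteq> {0<..<1::real}" by auto
  then have "continuous_on {0<..<1} (\<lambda>y. phi (sqrt y) + sqrt y * dphi (sqrt y))"
    by (intro continuous_intros continuous_on_compose2[OF continuous_on_phi]
        continuous_on_compose2[OF continuous_on_dphi]) auto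
  then have "continuous_on {0<..<1} psi"
    by (rule continuous_on_cong[THEN iffD1, rotated 2]) (auto simp: psi_def)
  then show ?thesis using assms by (simp add: continuous_on_eq_continuous_at)
qed

lemma continuous_on_psi:
  assumes "b < 1"
  shows "continuous_on {0..b} psi"
proof -
  define b' where "b' = max b (1/2)"
  have b': "0 < b'" "b' < 1" "b \<le> b'" using assms by (auto simp: b'_def)
  have "continuous_on {0..b'} psi"
  proof (rule continuous_on_IccI)
    show "(psi \<longlongrightarrow> psi 0) (at_right 0)" using psi_tendsto_at_right_0 by (simp add: psi_def)
    have "at_left b' \<le> at b'" by (simp add: at_le)
    then show "(psi \<longlongrightarrow> psi b') (at_left b')"
      using isCont_psi[OF b'(1,2)] by (simp add: isCont_def tendsto_mono)
    show "(psi \<longlongrightarrow> psi x) (at x)" if "0 < x" "x < b'" for x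
      using isCont_psi[of x] that b' by (simp add: isCont_def)
  qed (use b' in auto)
  then show ?thesis by (rule continuous_on_subset) (use b' in auto)
qed

definition Psi :: "real \<Rightarrow> real" where
  "Psi y = integral {0..y} psi"

lemma has_real_derivative_Psi:
  "b < 1 \<Longrightarrow> y \<in> {0..b} \<Longrightarrow> (Psi has_real_derivative psi y) (at y within {0..b})"
  unfolding Psi_def[abs_def] by (rule integral_has_real_derivative[OF continuous_on_psi])

lemma inner_mf:
  assumes "norm u < 1"
  shows "u \<bullet> mf \<rho> u w = 3 * m_e \<rho> * psi ((norm u)\<^sup>2) * (u \<bullet> w)"
proof (cases "u = 0")
  case False
  then have s: "0 < norm u" "norm u < 1" using assms by auto
  then have "u \<bullet> mf \<rho> u w
      = 3 * m_e \<rho> * (phi (norm u) * (u \<bullet> w) + dphi (norm u) / norm u * (u \<bullet> w) * (norm u)\<^sup>2)"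
    using False by (simp add: mf_def deriv_phi inner_add_right power2_norm_eq_inner)
  also have "\<dots> = 3 * m_e \<rho> * psi ((norm u)\<^sup>2) * (u \<bullet> w)"
    using s by (simp add: psi_def power2_eq_square field_simps)
  finally show ?thesis .
qed (simp add: mf_def)

lemma inner_mass:
  assumes "norm v < 1"
  shows "v \<bullet> mass \<rho> v w = gam v * (v \<bullet> w) + gam v ^ 3 * (v \<bullet> v) * (v \<bullet> w)
           + 3 * m_e \<rho> * psi ((norm v)\<^sup>2) * (v \<bullet> w)"
  unfolding mass_def inner_add_right inner_mf[OF assms] by (simp add: m0_def inner_add_right)

lemma bdd_below_potential:
  assumes "continuous_on UNIV V" "cond_U V \<or> cond_U' V"
  shows "bdd_below (range V)"
  using assms(2)
proof
  assume "cond_U' V"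
  then obtain R where R: "\<And>x. R \<le> norm x \<Longrightarrow> 0 \<le> V x"
    unfolding cond_U'_def filterlim_at_top eventually_at_infinity by blast
  have "compact (V ` cball 0 R)"
    by (rule compact_continuous_image[OF continuous_on_subset[OF assms(1)]]) auto
  then obtain B where "\<And>x. x \<in> cball 0 R \<Longrightarrow> \<bar>V x\<bar> \<le> B"
    using compact_imp_bounded bounded_real by (metis imageI)
  then have near: "- B \<le> V x" if "norm x \<le> R" for x
    using that by fastforce
  have "- \<bar>B\<bar> \<le> V x" for x
  proof (cases "R \<le> norm x")
    case True
    then show ?thesis using R[of x] by linarith
  next
    case False
    then show ?thesis using near[of x] by linarith
  qed
  then show ?thesis by (auto simp: bdd_below_def)
qed (simp add: cond_U_def)

section \<open>Global solutions with bounded velocity\<close>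

locale effective_solution =
  fixes V \<rho> :: "real^3 \<Rightarrow> real" and \<epsilon> :: real
    and r u u' u'' :: "real \<Rightarrow> real^3" and ub c :: real
  assumes V_C3: "Ck 3 V"
    and V_cond: "cond_U V \<or> cond_U' V"
    and charge_nz: "charge \<rho> \<noteq> 0"
    and eps: "\<epsilon> > 0"
    and dr: "\<And>t. t \<ge> 0 \<Longrightarrow> (r has_vector_derivative u t) (at t within {0..})"
    and du: "\<And>t. t \<ge> 0 \<Longrightarrow> (u has_vector_derivative u' t) (at t within {0..})"
    and ddu: "\<And>t. t \<ge> 0 \<Longrightarrow> (u' has_vector_derivative u'' t) (at t within {0..})"
    and eq: "\<And>t. t \<ge> 0 \<Longrightarrow>
       mass \<rho> (u t) (u' t) = - grad V (r t) + \<epsilon> *\<^sub>R acoef \<rho> (u t) (u'' t)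
                              + \<epsilon> *\<^sub>R bcoef \<rho> (u t) (u' t)"
    and ub_lt_1: "ub < 1" and u_le_ub: "\<And>t. t \<ge> 0 \<Longrightarrow> norm (u t) \<le> ub"
    and u'_le_c: "\<And>t. t \<ge> 0 \<Longrightarrow> norm (u' t) \<le> c"
begin

lemma norm_u_lt_1: "t \<ge> 0 \<Longrightarrow> norm (u t) < 1"
  using u_le_ub[of t] ub_lt_1 by simp

lemma eps_acoef_scale_pos: "0 < \<epsilon> * acoef_scale \<rho>"
  using eps acoef_scale_pos[OF charge_nz] by simp

lemma inner_u_u_range: "t \<ge> 0 \<Longrightarrow> u t \<bullet> u t \<in> {0..ub\<^sup>2}"
  using u_le_ub[of t] by (auto simp: power2_norm_eq_inner[symmetric] power_mono)

lemma ub_squared_lt_1: "ub\<^sup>2 < 1"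
proof -
  have "0 \<le> ub" using u_le_ub[of 0] norm_ge_zero[of "u 0"] by linarith
  then show ?thesis using ub_lt_1 by (simp add: abs_square_less_1)
qed

definition energy :: "real \<Rightarrow> real" where
  "energy t = gam (u t) + (3 * m_e \<rho> / 2) * Psi (u t \<bullet> u t) + V (r t)
     - \<epsilon> * acoef_scale \<rho> * (4 * gam (u t) ^ 6 - 3 * gam (u t) ^ 4) * (u t \<bullet> u' t)"

lemma has_real_derivative_energy:
  assumes t: "t \<ge> 0"
  shows "(energy has_real_derivative
      - (\<epsilon> * acoef_scale \<rho>) * (gam (u t) ^ 6 * (u' t \<bullet> u' t) + 6 * gam (u t) ^ 8 * (u t \<bullet> u' t)\<^sup>2))
    (at t within {0..})"
proof -
  let ?T = "{0::real..}"
  define g where "g = gam (u t)"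
  define x where "x = u t \<bullet> u t"
  define p where "p = u t \<bullet> u' t"
  define q where "q = u t \<bullet> u'' t"
  define n where "n = u' t \<bullet> u' t"
  define gV where "gV = grad V (r t) \<bullet> u t"
  define a where "a = acoef_scale \<rho>"
  have n1: "norm (u t) < 1" by (rule norm_u_lt_1[OF t])
  have dg: "((\<lambda>t. gam (u t)) has_real_derivative g ^ 3 * p) (at t within ?T)"
    unfolding g_def p_def by (rule has_real_derivative_gam_comp[OF du[OF t] n1])
  have dx: "((\<lambda>t. u t \<bullet> u t) has_real_derivative 2 * p) (at t within ?T)"
    using has_real_derivative_inner[OF du[OF t] du[OF t]] by (simp add: p_def inner_commute)
  have dp: "((\<lambda>t. u t \<bullet> u' t) has_real_derivative q + n) (at t within ?T)"
    using has_real_derivative_inner[OF du[OF t] ddu[OF t]] by (simp add: q_def n_def inner_commute)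
  have dPsi: "((\<lambda>t. Psi (u t \<bullet> u t)) has_real_derivative psi x * (2 * p)) (at t within ?T)"
  proof -
    have "(Psi has_real_derivative psi x) (at (u t \<bullet> u t) within (\<lambda>t. u t \<bullet> u t) ` ?T)"
      using has_real_derivative_Psi[OF ub_squared_lt_1 inner_u_u_range[OF t]] inner_u_u_range
      by (auto simp: x_def intro: DERIV_subset)
    from DERIV_image_chain[OF this dx] show ?thesis by (simp add: o_def)
  qed
  have dV: "((\<lambda>t. V (r t)) has_real_derivative gV) (at t within ?T)"
    using has_real_derivative_comp_grad[OF dr[OF t] Ck_has_derivative_grad[OF V_C3, of "[]"]]
    by (simp add: gV_def)
  have "(energy has_real_derivative
      g ^ 3 * p + (3 * m_e \<rho> / 2) * (psi x * (2 * p)) + gV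
      - (\<epsilon> * a * (4 * (6 * g ^ 5 * (g ^ 3 * p)) - 3 * (4 * g ^ 3 * (g ^ 3 * p))) * p
         + \<epsilon> * a * (4 * g ^ 6 - 3 * g ^ 4) * (q + n))) (at t within ?T)"
    unfolding energy_def[abs_def]
    by (rule derivative_eq_intros dg dPsi dV dp refl | simp add: g_def a_def p_def algebra_simps flip: power_add)+
  moreover have "g ^ 3 * p + (3 * m_e \<rho> / 2) * (psi x * (2 * p)) + gV
      - (\<epsilon> * a * (4 * (6 * g ^ 5 * (g ^ 3 * p)) - 3 * (4 * g ^ 3 * (g ^ 3 * p))) * p
         + \<epsilon> * a * (4 * g ^ 6 - 3 * g ^ 4) * (q + n))
      = - (\<epsilon> * a) * (g ^ 6 * n + 6 * g ^ 8 * p\<^sup>2)"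
  proof -
    have dotted: "g * p + g ^ 3 * x * p + 3 * m_e \<rho> * psi x * p
        = - gV + \<epsilon> * (a * (g ^ 4 * q + 4 * g ^ 6 * q * x))
          + \<epsilon> * (3 * a * (2 * g ^ 6 * p\<^sup>2 + g ^ 6 * n * x + 6 * g ^ 8 * p\<^sup>2 * x))"
      using arg_cong[OF eq[OF t], of "\<lambda>v. u t \<bullet> v"]
      unfolding inner_mass[OF n1] inner_add_right inner_minus_right inner_scaleR_right inner_acoef inner_bcoef
      by (simp add: g_def p_def q_def n_def gV_def a_def x_def power2_norm_eq_inner algebra_simps
          inner_commute[of "u t" "grad V (r t)"])
    have "g\<^sup>2 * (1 - x) = 1" using gam_squared[OF n1] by (simp add: g_def x_def power2_norm_eq_inner)
    with dotted show ?thesis by algebra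
  qed
  ultimately show ?thesis by (simp add: g_def n_def p_def a_def)
qed

lemma energy_decrease:
  assumes "0 \<le> a" "a \<le> b" and big: "\<And>t. t \<in> {a..b} \<Longrightarrow> k \<le> (norm (u' t))\<^sup>2"
  shows "energy b \<le> energy a - \<epsilon> * acoef_scale \<rho> * k * (b - a)"
proof -
  let ?D = "\<lambda>t. - (\<epsilon> * acoef_scale \<rho>) * (gam (u t) ^ 6 * (u' t \<bullet> u' t) + 6 * gam (u t) ^ 8 * (u t \<bullet> u' t)\<^sup>2)"
  have bound: "?D t \<le> - (\<epsilon> * acoef_scale \<rho> * k)" if t: "t \<in> {a..b}" for t
  proof -
    have "1 \<le> gam (u t)" using gam_ge_1[OF norm_u_lt_1] t assms(1) by simp
    then have "u' t \<bullet> u' t \<le> gam (u t) ^ 6 * (u' t \<bullet> u' t)" "0 \<le> 6 * gam (u t) ^ 8 * (u t \<bullet> u' t)\<^sup>2"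
      using mult_right_mono[of 1 "gam (u t) ^ 6" "u' t \<bullet> u' t"] by simp_all
    then have "(norm (u' t))\<^sup>2 \<le> gam (u t) ^ 6 * (u' t \<bullet> u' t) + 6 * gam (u t) ^ 8 * (u t \<bullet> u' t)\<^sup>2"
      unfolding power2_norm_eq_inner by linarith
    then have "\<epsilon> * acoef_scale \<rho> * k
        \<le> \<epsilon> * acoef_scale \<rho> * (gam (u t) ^ 6 * (u' t \<bullet> u' t) + 6 * gam (u t) ^ 8 * (u t \<bullet> u' t)\<^sup>2)"
      using big[OF t] eps_acoef_scale_pos by (intro mult_left_mono) auto
    then show ?thesis by simp
  qed
  have deriv: "(energy has_real_derivative ?D t) (at t within {a..b})" if "t \<in> {a..b}" for t
    using has_real_derivative_energy[of t] that assms(1) by (auto intro: DERIV_subset)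
  show ?thesis using decrease_if_derivative_le[OF \<open>a \<le> b\<close> deriv bound] .
qed

lemma energy_antimono: "0 \<le> a \<Longrightarrow> a \<le> b \<Longrightarrow> energy b \<le> energy a"
  using energy_decrease[of a b 0] by simp

lemma energy_minus_kinetic_potential_bounded: "\<exists>K. \<forall>t\<ge>0. \<bar>energy t - gam (u t) - V (r t)\<bar> \<le> K"
proof -
  have "continuous_on {0..ub\<^sup>2} Psi"
    by (rule continuous_on_vector_derivative)
       (use has_real_derivative_Psi[OF ub_squared_lt_1] in \<open>auto simp: has_real_derivative_iff_has_vector_derivative\<close>)
  then obtain P where P: "\<And>y. y \<in> {0..ub\<^sup>2} \<Longrightarrow> \<bar>Psi y\<bar> \<le> P"
    using compact_imp_bounded[OF compact_continuous_image] bounded_real by (metis compact_Icc imageI)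
  define g where "g = 1 / sqrt (1 - ub\<^sup>2)"
  define K where "K = \<bar>3 * m_e \<rho> / 2\<bar> * P + \<epsilon> * acoef_scale \<rho> * (4 * g ^ 6 + 3 * g ^ 4) * \<bar>c\<bar>"
  have "\<bar>energy t - gam (u t) - V (r t)\<bar> \<le> K" if t: "t \<ge> 0" for t
  proof -
    have g: "0 \<le> gam (u t)" "gam (u t) ^ 6 \<le> g ^ 6" "gam (u t) ^ 4 \<le> g ^ 4"
      using gam_ge_1[OF norm_u_lt_1[OF t]] gam_power_le[OF u_le_ub[OF t] ub_lt_1] by (auto simp: g_def)
    have "\<bar>u t \<bullet> u' t\<bar> \<le> norm (u t) * norm (u' t)" by (rule Cauchy_Schwarz_ineq2)
    also have "\<dots> \<le> 1 * \<bar>c\<bar>"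
      using norm_u_lt_1[OF t] u'_le_c[OF t] by (intro mult_mono) auto
    finally have p: "\<bar>u t \<bullet> u' t\<bar> \<le> \<bar>c\<bar>" by simp
    have "0 \<le> gam (u t) ^ 4" "0 \<le> gam (u t) ^ 6" using g(1) by simp_all
    then have "\<bar>4 * gam (u t) ^ 6 - 3 * gam (u t) ^ 4\<bar> \<le> 4 * g ^ 6 + 3 * g ^ 4"
      using g(2,3) unfolding abs_le_iff by (intro conjI; linarith)
    then have "\<bar>\<epsilon> * acoef_scale \<rho> * (4 * gam (u t) ^ 6 - 3 * gam (u t) ^ 4) * (u t \<bullet> u' t)\<bar>
        \<le> \<epsilon> * acoef_scale \<rho> * (4 * g ^ 6 + 3 * g ^ 4) * \<bar>c\<bar>"
      unfolding abs_mult using eps acoef_scale_pos[OF charge_nz] p by (intro mult_mono mult_left_mono) auto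
    moreover have "\<bar>3 * m_e \<rho> / 2 * Psi (u t \<bullet> u t)\<bar> \<le> \<bar>3 * m_e \<rho> / 2\<bar> * P"
      unfolding abs_mult using P[OF inner_u_u_range[OF t]] by (intro mult_left_mono) auto
    ultimately show ?thesis unfolding energy_def K_def by linarith
  qed
  then show ?thesis by blast
qed

lemma energy_bdd_below: "bdd_below (energy ` {0..})"
proof -
  have "length ([] :: 3 list) \<le> 3" by simp
  with V_C3 have "continuous_on UNIV (Dpart [] V)" unfolding Ck_def by blast
  then obtain Vm where Vm: "\<And>x. Vm \<le> V x"
    using bdd_below_potential[OF _ V_cond] by (auto simp: bdd_below_def)
  obtain K where K: "\<And>t. t \<ge> 0 \<Longrightarrow> \<bar>energy t - gam (u t) - V (r t)\<bar> \<le> K"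
    using energy_minus_kinetic_potential_bounded by blast
  have "1 + Vm - K \<le> energy t" if "t \<ge> 0" for t
    using K[OF that] Vm[of "r t"] gam_ge_1[OF norm_u_lt_1[OF that]] by linarith
  then show ?thesis by (auto simp: bdd_below_def)
qed

text \<open>Under (U') the bounded energy confines the trajectory to a ball, on which the continuous
  derivatives of V are bounded.\<close>

lemma Dpart_bounded_along_trajectory:
  assumes "length is \<le> 3"
  shows "\<exists>B. \<forall>t\<ge>0. \<bar>Dpart is V (r t)\<bar> \<le> B"
  using V_cond
proof
  assume "cond_U V"
  then have "bounded (range (Dpart is V))" using assms unfolding cond_U_def by blast
  then show ?thesis unfolding bounded_real by blast
next
  assume "cond_U' V"
  obtain K where K: "\<And>t. t \<ge> 0 \<Longrightarrow> \<bar>energy t - gam (u t) - V (r t)\<bar> \<le> K"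
    using energy_minus_kinetic_potential_bounded by blast
  have upper: "V (r t) \<le> energy 0 + K" if t: "t \<ge> 0" for t
    using K[OF t] energy_antimono[OF order_refl t] gam_ge_1[OF norm_u_lt_1[OF t]] by linarith
  obtain R where R: "\<And>x. R \<le> norm x \<Longrightarrow> energy 0 + K + 1 \<le> V x"
    using \<open>cond_U' V\<close> unfolding cond_U'_def filterlim_at_top eventually_at_infinity by blast
  have inside: "r t \<in> cball 0 R" if "t \<ge> 0" for t
  proof -
    have "\<not> R \<le> norm (r t)" using R[of "r t"] upper[OF that] by linarith
    then show ?thesis by simp
  qed
  have "continuous_on UNIV (Dpart is V)" using V_C3 assms unfolding Ck_def by blast
  then have "compact (Dpart is V ` cball 0 R)"
    by (meson compact_cball compact_continuous_image continuous_on_subset subset_UNIV)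
  then obtain B where B: "\<And>x. x \<in> cball 0 R \<Longrightarrow> \<bar>Dpart is V x\<bar> \<le> B"
    using compact_imp_bounded bounded_real by (metis imageI)
  then show ?thesis using inside by (intro exI[of _ B]) auto

qed

lemma grad_Dpart_bounded_along_trajectory:
  assumes "length is \<le> 2"
  shows "\<exists>B. \<forall>t\<ge>0. norm (grad (Dpart is V) (r t)) \<le> B"
proof -
  have "\<exists>B. \<forall>x\<in>r ` {0..}. \<bar>Dpart [i] (Dpart is V) x\<bar> \<le> B" for i
    using Dpart_bounded_along_trajectory[of "i # is"] assms by auto
  then show ?thesis using bounded_grad_if_bounded_Dpart[of "r ` {0..}" "Dpart is V"] by auto
qed

lemma grad_V_lipschitz: "\<exists>L. \<forall>s\<ge>0. \<forall>t\<ge>0. norm (grad V (r t) - grad V (r s)) \<le> L * \<bar>t - s\<bar>"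
proof -
  have "\<forall>j. \<exists>L. \<forall>s\<ge>0. \<forall>t\<ge>0. \<bar>Dpart [j] V (r t) - Dpart [j] V (r s)\<bar> \<le> L * \<bar>t - s\<bar>"
  proof
    fix j
    obtain B where B: "\<And>t. t \<ge> 0 \<Longrightarrow> norm (grad (Dpart [j] V) (r t)) \<le> B"
      using grad_Dpart_bounded_along_trajectory[of "[j]"] by auto
    then have "0 \<le> B" using norm_ge_zero order_trans by blast
    have D: "((\<lambda>t. Dpart [j] V (r t)) has_vector_derivative grad (Dpart [j] V) (r t) \<bullet> u t) (at t within {0..})"
      if "t \<in> {0..}" for t
    proof -
      have "length [j] < 3" by simp
      from has_real_derivative_comp_grad[OF dr Ck_has_derivative_grad[OF V_C3 this]] that
      show ?thesis by (simp add: has_real_derivative_iff_has_vector_derivative)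
    qed
    have DB: "norm (grad (Dpart [j] V) (r t) \<bullet> u t) \<le> B" if "t \<in> {0..}" for t
    proof -
      have "norm (grad (Dpart [j] V) (r t) \<bullet> u t) \<le> norm (grad (Dpart [j] V) (r t)) * norm (u t)"
        by (simp add: Cauchy_Schwarz_ineq2)
      also have "\<dots> \<le> B * 1"
        using that B[of t] norm_u_lt_1[of t] \<open>0 \<le> B\<close> by (intro mult_mono) auto
      finally show ?thesis by simp
    qed
    have "\<bar>Dpart [j] V (r t) - Dpart [j] V (r s)\<bar> \<le> B * \<bar>t - s\<bar>" if "s \<ge> 0" "t \<ge> 0" for s t
      using norm_diff_le_derivative_bound[OF convex_real_interval(1) D DB, of s t] that by simp
    then show "\<exists>L. \<forall>s\<ge>0. \<forall>t\<ge>0. \<bar>Dpart [j] V (r t) - Dpart [j] V (r s)\<bar> \<le> L * \<bar>t - s\<bar>" by blast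
  qed
  then obtain L where L: "\<And>j s t. s \<ge> 0 \<Longrightarrow> t \<ge> 0 \<Longrightarrow> \<bar>Dpart [j] V (r t) - Dpart [j] V (r s)\<bar> \<le> L j * \<bar>t - s\<bar>"
    unfolding choice_iff by blast
  have "norm (grad V (r t) - grad V (r s)) \<le> (\<Sum>j\<in>UNIV. L j) * \<bar>t - s\<bar>" if "s \<ge> 0" "t \<ge> 0" for s t
  proof -
    have "norm (grad V (r t) - grad V (r s)) \<le> (\<Sum>j\<in>UNIV. \<bar>(grad V (r t) - grad V (r s)) $ j\<bar>)"
      by (rule norm_le_l1_cart)
    also have "\<dots> \<le> (\<Sum>j\<in>UNIV. L j * \<bar>t - s\<bar>)"
      by (rule sum_mono) (use L[OF that] in \<open>simp add: grad_def\<close>)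
    finally show ?thesis by (simp add: sum_distrib_right)
  qed
  then show ?thesis by blast
qed

definition residual :: "real \<Rightarrow> real^3" where
  "residual t = mass \<rho> (u t) (u' t) - \<epsilon> *\<^sub>R bcoef \<rho> (u t) (u' t)"

lemma acceleration_eq: "t \<ge> 0 \<Longrightarrow> \<epsilon> *\<^sub>R acoef \<rho> (u t) (u'' t) = grad V (r t) + residual t"
  using eq[of t] by (simp add: residual_def algebra_simps)

lemma norm_residual_le:
  "\<exists>M B. \<forall>t\<ge>0. norm (residual t) \<le> M * norm (u' t) + B * (norm (u' t))\<^sup>2"
proof -
  obtain M where M: "\<And>v w. norm v \<le> ub \<Longrightarrow> norm (mass \<rho> v w) \<le> M * norm w"
    using mass_bounded[OF ub_lt_1] by blast
  obtain B where B: "\<And>v w. norm v \<le> ub \<Longrightarrow> norm (bcoef \<rho> v w) \<le> B * (norm w)\<^sup>2"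
    using bcoef_bounded[OF ub_lt_1] by blast
  have "norm (residual t) \<le> M * norm (u' t) + (\<epsilon> * B) * (norm (u' t))\<^sup>2" if "t \<ge> 0" for t
  proof -
    have "norm (mass \<rho> (u t) (u' t)) \<le> M * norm (u' t)" using M u_le_ub[OF that] by blast
    moreover have "norm (\<epsilon> *\<^sub>R bcoef \<rho> (u t) (u' t)) \<le> \<epsilon> * B * (norm (u' t))\<^sup>2"
      using B u_le_ub[OF that] eps by (simp add: mult_left_mono mult.assoc)
    ultimately show ?thesis
      using norm_triangle_ineq4[of "mass \<rho> (u t) (u' t)" "\<epsilon> *\<^sub>R bcoef \<rho> (u t) (u' t)"]
      unfolding residual_def by linarith
  qed
  then show ?thesis by blast
qed

lemma norm_u''_le: "t \<ge> 0 \<Longrightarrow> norm (u'' t) \<le> norm (grad V (r t) + residual t) / (\<epsilon> * acoef_scale \<rho>)"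
proof -
  assume t: "t \<ge> 0"
  have "\<epsilon> * acoef_scale \<rho> * norm (u'' t) \<le> \<epsilon> * norm (acoef \<rho> (u t) (u'' t))"
    using norm_acoef_ge[OF norm_u_lt_1[OF t]] eps by (simp add: mult.assoc)
  also have "\<dots> = norm (grad V (r t) + residual t)"
    using acceleration_eq[OF t, symmetric] eps by simp
  finally show ?thesis using eps_acoef_scale_pos by (simp add: field_simps)
qed

lemma u''_bounded: "\<exists>K. \<forall>t\<ge>0. norm (u'' t) \<le> K"
proof -
  obtain G where G: "\<And>t. t \<ge> 0 \<Longrightarrow> norm (grad V (r t)) \<le> G"
    using grad_Dpart_bounded_along_trajectory[of "[]"] by auto
  obtain M B where MB: "\<And>t. t \<ge> 0 \<Longrightarrow> norm (residual t) \<le> M * norm (u' t) + B * (norm (u' t))\<^sup>2"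
    using norm_residual_le by blast
  have "norm (residual t) \<le> \<bar>M\<bar> * \<bar>c\<bar> + \<bar>B\<bar> * c\<^sup>2" if t: "t \<ge> 0" for t
  proof -
    have c: "norm (u' t) \<le> \<bar>c\<bar>" using u'_le_c[OF t] by simp
    then have c2: "(norm (u' t))\<^sup>2 \<le> c\<^sup>2" using power_mono[OF c norm_ge_zero, of 2] by simp
    have "M * norm (u' t) \<le> \<bar>M\<bar> * norm (u' t)" by (simp add: mult_right_mono)
    also have "\<dots> \<le> \<bar>M\<bar> * \<bar>c\<bar>" using c by (simp add: mult_left_mono)
    finally have "M * norm (u' t) \<le> \<bar>M\<bar> * \<bar>c\<bar>" .
    moreover have "B * (norm (u' t))\<^sup>2 \<le> \<bar>B\<bar> * (norm (u' t))\<^sup>2" by (simp add: mult_right_mono)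
    moreover have "\<dots> \<le> \<bar>B\<bar> * c\<^sup>2" using c2 by (simp add: mult_left_mono)
    ultimately show ?thesis using MB[OF t] by linarith
  qed
  then have "norm (grad V (r t) + residual t) \<le> G + (\<bar>M\<bar> * \<bar>c\<bar> + \<bar>B\<bar> * c\<^sup>2)" if "t \<ge> 0" for t
    using norm_triangle_ineq[of "grad V (r t)" "residual t"] G[OF that] that by fastforce
  then have "norm (u'' t) \<le> (G + (\<bar>M\<bar> * \<bar>c\<bar> + \<bar>B\<bar> * c\<^sup>2)) / (\<epsilon> * acoef_scale \<rho>)" if "t \<ge> 0" for t
    using norm_u''_le[OF that] divide_right_mono[OF _ less_imp_le[OF eps_acoef_scale_pos]] that
    by (meson order_trans)
  then show ?thesis by blast
qed

lemma energy_drop: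
  assumes "\<delta> > 0"
  shows "\<exists>h>0. \<exists>\<kappa>>0. \<forall>t\<ge>0. \<delta> \<le> norm (u' t) \<longrightarrow> energy (t + h) \<le> energy t - \<kappa>"
proof -
  obtain K where K: "\<And>t. t \<in> {0..} \<Longrightarrow> norm (u'' t) \<le> K" using u''_bounded by auto
  have "norm (u'' 0) \<le> K" using K by simp
  then have "0 \<le> K" by (rule order_trans[OF norm_ge_zero])
  define h where "h = \<delta> / (2 * (K + 1))"
  have "h > 0" using assms \<open>0 \<le> K\<close> by (simp add: h_def)
  have Kh: "K * h \<le> \<delta> / 2"
    unfolding h_def using assms \<open>0 \<le> K\<close> by (intro mult_div_twice_succ_le) auto
  have D: "(u' has_vector_derivative u'' x) (at x within {0..})" if "x \<in> {0..}" for x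
    using ddu that by simp
  have "energy (t + h) \<le> energy t - \<epsilon> * acoef_scale \<rho> * (\<delta> / 2)\<^sup>2 * h"
    if t: "t \<ge> 0" and big: "\<delta> \<le> norm (u' t)" for t
  proof -
    have "(\<delta> / 2)\<^sup>2 \<le> (norm (u' s))\<^sup>2" if s: "s \<in> {t..t + h}" for s
    proof -
      have "norm (u' s - u' t) \<le> K * \<bar>s - t\<bar>"
        using norm_diff_le_derivative_bound[OF convex_real_interval(1) D K, of t s] s t by simp
      also have "\<dots> \<le> K * h" using s \<open>0 \<le> K\<close> by (intro mult_left_mono) auto
      finally have "\<delta> / 2 \<le> norm (u' s)"
        using Kh big norm_triangle_ineq2[of "u' t" "u' s"] by (simp add: norm_minus_commute)
      then show ?thesis using assms by (intro power_mono) auto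
    qed
    then have "energy (t + h) \<le> energy t - \<epsilon> * acoef_scale \<rho> * (\<delta> / 2)\<^sup>2 * ((t + h) - t)"
      using t \<open>h > 0\<close> by (intro energy_decrease) auto
    then show ?thesis by simp
  qed
  moreover have "0 < \<epsilon> * acoef_scale \<rho> * (\<delta> / 2)\<^sup>2 * h"
    using eps_acoef_scale_pos assms \<open>h > 0\<close> by simp
  ultimately show ?thesis using \<open>h > 0\<close> by blast
qed

lemma u'_tendsto_0: "(u' \<longlongrightarrow> 0) at_top"
proof (rule ccontr)
  assume "\<not> (u' \<longlongrightarrow> 0) at_top"
  then obtain \<delta> where "\<delta> > 0" and freq: "\<And>T. \<exists>t\<ge>T. \<delta> \<le> norm (u' t)"
    using not_tendsto_0_frequently by blast
  then obtain h \<kappa> where "h > 0" "\<kappa> > 0"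
    and drop: "\<And>t. t \<ge> 0 \<Longrightarrow> \<delta> \<le> norm (u' t) \<Longrightarrow> energy (t + h) \<le> energy t - \<kappa>"
    using energy_drop by blast
  have "\<exists>T'\<ge>T. energy T' \<le> energy T - \<kappa>" if "T \<ge> 0" for T
  proof -
    obtain t where "t \<ge> T" "\<delta> \<le> norm (u' t)" using freq by blast
    then have "energy (t + h) \<le> energy T - \<kappa>"
      using drop[of t] energy_antimono[of T t] \<open>T \<ge> 0\<close> by linarith
    then show ?thesis using \<open>t \<ge> T\<close> \<open>h > 0\<close> by (intro exI[of _ "t + h"]) auto
  qed
  then show False using not_bdd_below_if_repeated_drop[OF \<open>\<kappa> > 0\<close>] energy_bdd_below by blast
qed

lemma residual_tendsto_0: "(residual \<longlongrightarrow> 0) at_top"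
proof -
  have n: "((\<lambda>t. norm (u' t)) \<longlongrightarrow> 0) at_top" using tendsto_norm_zero[OF u'_tendsto_0] .
  obtain M B where MB: "\<And>t. t \<ge> 0 \<Longrightarrow> norm (residual t) \<le> M * norm (u' t) + B * (norm (u' t))\<^sup>2"
    using norm_residual_le by blast
  have "((\<lambda>t. (norm (u' t))\<^sup>2) \<longlongrightarrow> 0) at_top" using tendsto_power[OF n, of 2] by simp
  then have "((\<lambda>t. M * norm (u' t) + B * (norm (u' t))\<^sup>2) \<longlongrightarrow> 0) at_top"
    using tendsto_add[OF tendsto_mult_right_zero[OF n] tendsto_mult_right_zero] by simp
  moreover have "eventually (\<lambda>t. norm (residual t) \<le> M * norm (u' t) + B * (norm (u' t))\<^sup>2) at_top"
    using eventually_ge_at_top[of 0] by (rule eventually_mono) (rule MB)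
  ultimately show ?thesis by (rule Lim_null_comparison[rotated])
qed

lemma acceleration_near_grad:
  assumes "\<eta> > 0"
  shows "\<exists>h>0. \<exists>T\<ge>0. \<forall>t\<ge>T. \<forall>s\<in>{t..t + h}. norm (\<epsilon> *\<^sub>R acoef \<rho> (u s) (u'' s) - grad V (r t)) \<le> \<eta>"
proof -
  obtain L where L: "\<And>s t. s \<ge> 0 \<Longrightarrow> t \<ge> 0 \<Longrightarrow> norm (grad V (r t) - grad V (r s)) \<le> L * \<bar>t - s\<bar>"
    using grad_V_lipschitz by blast
  have "norm (grad V (r 1) - grad V (r 0)) \<le> L" using L[of 0 1] by simp
  then have "0 \<le> L" using norm_ge_zero[of "grad V (r 1) - grad V (r 0)"] by linarith
  define h where "h = \<eta> / (2 * (L + 1))"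
  have "h > 0" using assms \<open>0 \<le> L\<close> by (simp add: h_def)
  have Lh: "L * h \<le> \<eta> / 2"
    unfolding h_def using assms \<open>0 \<le> L\<close> by (intro mult_div_twice_succ_le) auto
  have "eventually (\<lambda>s. norm (residual s) < \<eta> / 2) at_top"
    using tendstoD[OF residual_tendsto_0, of "\<eta> / 2"] assms by simp
  then obtain T where T: "\<And>s. s \<ge> T \<Longrightarrow> norm (residual s) < \<eta> / 2"
    unfolding eventually_at_top_linorder by blast
  have "norm (\<epsilon> *\<^sub>R acoef \<rho> (u s) (u'' s) - grad V (r t)) \<le> \<eta>"
    if t: "t \<ge> max T 0" and s: "s \<in> {t..t + h}" for t s
  proof -
    have "s \<ge> 0" using t s by auto
    have "norm (grad V (r s) - grad V (r t)) \<le> L * \<bar>s - t\<bar>" using L[of t s] t s by auto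
    also have "\<dots> \<le> L * h" using s \<open>0 \<le> L\<close> by (intro mult_left_mono) auto
    finally have "norm (grad V (r s) - grad V (r t)) \<le> L * h" .
    moreover have "norm (residual s) \<le> \<eta> / 2" using T[of s] t s by fastforce
    ultimately show ?thesis
      using acceleration_eq[OF \<open>s \<ge> 0\<close>] Lh norm_triangle_ineq[of "grad V (r s) - grad V (r t)" "residual s"]
      by (simp add: algebra_simps)
  qed
  then show ?thesis using \<open>h > 0\<close> by (intro exI[of _ h] conjI exI[of _ "max T 0"]) auto
qed

text \<open>Once \<epsilon> a(u) u'' stays close to \<nabla>V(r(t)) for a while, the coercivity of a makes u''
  point along \<nabla>V(r(t)).\<close>

lemma grad_V_pushes_u'':
  assumes "\<delta> > 0"
  shows "\<exists>h>0. \<exists>\<kappa>>0. \<exists>T\<ge>0. \<forall>t\<ge>T. \<delta> \<le> norm (grad V (r t)) \<longrightarrow>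
           (\<forall>s\<in>{t..t + h}. \<kappa> \<le> grad V (r t) \<bullet> u'' s)"
proof -
  obtain A where A: "\<And>v w. norm v \<le> ub \<Longrightarrow> norm (acoef \<rho> v w) \<le> A * norm w"
    using acoef_bounded[OF ub_lt_1] by blast
  define \<alpha> where "\<alpha> = \<epsilon> * acoef_scale \<rho>"
  define \<beta> where "\<beta> = \<epsilon> * (\<bar>A\<bar> + 1)"
  have "\<alpha> > 0" "\<beta> > 0" using eps_acoef_scale_pos eps by (simp_all add: \<alpha>_def \<beta>_def)
  define \<eta> where "\<eta> = min (\<delta> / 2) (\<alpha> * \<delta> / (4 * \<beta>))"
  have "\<eta> > 0" using assms \<open>\<alpha> > 0\<close> \<open>\<beta> > 0\<close> by (simp add: \<eta>_def)
  then obtain h T where "h > 0" "T \<ge> 0"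
    and near: "\<forall>t\<ge>T. \<forall>s\<in>{t..t + h}. norm (\<epsilon> *\<^sub>R acoef \<rho> (u s) (u'' s) - grad V (r t)) \<le> \<eta>"
    using acceleration_near_grad by blast
  have "\<alpha> * \<delta>\<^sup>2 / (8 * \<beta>\<^sup>2) \<le> grad V (r t) \<bullet> u'' s"
    if t: "t \<ge> T" "\<delta> \<le> norm (grad V (r t))" and s: "s \<in> {t..t + h}" for t s
  proof (rule inner_ge_if_coercive[OF \<open>\<alpha> > 0\<close> \<open>\<beta> > 0\<close> assms])
    have "s \<ge> 0" using t s \<open>T \<ge> 0\<close> by auto
    show "\<alpha> * (norm (u'' s))\<^sup>2 \<le> u'' s \<bullet> (\<epsilon> *\<^sub>R acoef \<rho> (u s) (u'' s))"
      using inner_acoef_ge[OF norm_u_lt_1[OF \<open>s \<ge> 0\<close>]] eps by (simp add: \<alpha>_def mult.assoc)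
    have "A * norm (u'' s) \<le> (\<bar>A\<bar> + 1) * norm (u'' s)" by (rule mult_right_mono) auto
    then have "norm (acoef \<rho> (u s) (u'' s)) \<le> (\<bar>A\<bar> + 1) * norm (u'' s)"
      using A[OF u_le_ub[OF \<open>s \<ge> 0\<close>], of "u'' s"] by linarith
    then show "norm (\<epsilon> *\<^sub>R acoef \<rho> (u s) (u'' s)) \<le> \<beta> * norm (u'' s)"
      using eps by (simp add: \<beta>_def mult.assoc mult_left_mono)
    show "norm (\<epsilon> *\<^sub>R acoef \<rho> (u s) (u'' s) - grad V (r t)) \<le> \<eta>" using near t s by blast
  qed (use t in \<open>auto simp: \<eta>_def\<close>)
  moreover have "0 < \<alpha> * \<delta>\<^sup>2 / (8 * \<beta>\<^sup>2)" using \<open>\<alpha> > 0\<close> \<open>\<beta> > 0\<close> assms by simp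
  ultimately show ?thesis using \<open>h > 0\<close> \<open>T \<ge> 0\<close>
    by (intro exI[of _ h] conjI exI[of _ "\<alpha> * \<delta>\<^sup>2 / (8 * \<beta>\<^sup>2)"] exI[of _ T]) auto
qed

lemma inner_u'_increase:
  assumes "t \<ge> 0" "h \<ge> 0" and push: "\<And>s. s \<in> {t..t + h} \<Longrightarrow> \<kappa> \<le> v \<bullet> u'' s"
  shows "v \<bullet> u' t + \<kappa> * h \<le> v \<bullet> u' (t + h)"
proof -
  have "- (v \<bullet> u' (t + h)) \<le> - (v \<bullet> u' t) - \<kappa> * ((t + h) - t)"
  proof (rule decrease_if_derivative_le)
    show "((\<lambda>s. - (v \<bullet> u' s)) has_real_derivative - (v \<bullet> u'' s)) (at s within {t..t + h})"
      if "s \<in> {t..t + h}" for s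
    proof -
      have "((\<lambda>s. v \<bullet> u' s) has_real_derivative v \<bullet> u'' s) (at s within {0..})"
        using has_real_derivative_inner[OF has_vector_derivative_const ddu[of s]] that assms(1) by simp
      then have "((\<lambda>s. v \<bullet> u' s) has_real_derivative v \<bullet> u'' s) (at s within {t..t + h})"
        by (rule DERIV_subset) (use assms(1) in auto)
      then show ?thesis by (rule DERIV_minus)
    qed
  qed (use assms push in auto)
  then show ?thesis by simp
qed

lemma grad_V_tendsto_0: "((\<lambda>t. grad V (r t)) \<longlongrightarrow> 0) at_top"
proof (rule ccontr)
  assume "\<not> ((\<lambda>t. grad V (r t)) \<longlongrightarrow> 0) at_top"
  then obtain \<delta> where "\<delta> > 0" and freq: "\<And>T. \<exists>t\<ge>T. \<delta> \<le> norm (grad V (r t))"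
    using not_tendsto_0_frequently by blast
  obtain h \<kappa> T where "h > 0" "\<kappa> > 0" "T \<ge> 0"
    and push: "\<forall>t\<ge>T. \<delta> \<le> norm (grad V (r t)) \<longrightarrow> (\<forall>s\<in>{t..t + h}. \<kappa> \<le> grad V (r t) \<bullet> u'' s)"
    using grad_V_pushes_u''[OF \<open>\<delta> > 0\<close>] by blast
  obtain G where G: "\<And>t. t \<ge> 0 \<Longrightarrow> norm (grad V (r t)) \<le> G"
    using grad_Dpart_bounded_along_trajectory[of "[]"] by auto
  have "0 \<le> G" using G[of 0] by (simp add: order_trans[OF norm_ge_zero])
  define \<zeta> where "\<zeta> = \<kappa> * h / (4 * (G + 1))"
  have "\<zeta> > 0" using \<open>\<kappa> > 0\<close> \<open>h > 0\<close> \<open>0 \<le> G\<close> by (simp add: \<zeta>_def)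
  have "eventually (\<lambda>s. norm (u' s) < \<zeta>) at_top"
    using tendstoD[OF u'_tendsto_0 \<open>\<zeta> > 0\<close>] by simp
  then obtain T' where T': "\<And>s. s \<ge> T' \<Longrightarrow> norm (u' s) < \<zeta>"
    unfolding eventually_at_top_linorder by blast
  obtain t where t: "t \<ge> max T T'" and "\<delta> \<le> norm (grad V (r t))" using freq by blast
  then have "grad V (r t) \<bullet> u' t + \<kappa> * h \<le> grad V (r t) \<bullet> u' (t + h)"
    using push \<open>T \<ge> 0\<close> \<open>h > 0\<close> by (intro inner_u'_increase) auto
  moreover have "\<bar>grad V (r t) \<bullet> u' s\<bar> \<le> G * \<zeta>" if "s \<ge> t" for s
  proof -
    have "\<bar>grad V (r t) \<bullet> u' s\<bar> \<le> norm (grad V (r t)) * norm (u' s)" by (rule Cauchy_Schwarz_ineq2)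
    also have "\<dots> \<le> G * \<zeta>"
      using G[of t] T'[of s] t that \<open>0 \<le> G\<close> \<open>T \<ge> 0\<close> by (intro mult_mono) (auto simp: less_imp_le)
    finally show ?thesis .
  qed
  ultimately have "\<kappa> * h \<le> 2 * (G * \<zeta>)" using \<open>h > 0\<close> by (smt (verit) order_refl)
  also have "\<dots> = \<kappa> * h * (G / (2 * (G + 1)))" using \<open>0 \<le> G\<close> by (simp add: \<zeta>_def field_simps)
  also have "\<dots> < \<kappa> * h * 1"
    using \<open>\<kappa> > 0\<close> \<open>h > 0\<close> \<open>0 \<le> G\<close> by (intro mult_strict_left_mono) (simp_all add: field_simps)
  finally show False by simp
qed

lemma u''_tendsto_0: "(u'' \<longlongrightarrow> 0) at_top"
proof -
  have "((\<lambda>t. norm (grad V (r t) + residual t) / (\<epsilon> * acoef_scale \<rho>)) \<longlongrightarrow> 0) at_top"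
    using tendsto_divide[OF tendsto_norm[OF tendsto_add[OF grad_V_tendsto_0 residual_tendsto_0]]
        tendsto_const, of "\<epsilon> * acoef_scale \<rho>"] eps acoef_scale_pos[OF charge_nz] by simp
  moreover have "eventually (\<lambda>t. norm (u'' t) \<le> norm (grad V (r t) + residual t) / (\<epsilon> * acoef_scale \<rho>)) at_top"
    using eventually_ge_at_top[of 0] by (rule eventually_mono) (rule norm_u''_le)
  ultimately show ?thesis by (rule Lim_null_comparison[rotated])
qed

end

theorem theorem4p3:
  fixes V \<rho> :: "real^3 \<Rightarrow> real" and \<epsilon> :: real
    and r u u' u'' :: "real \<Rightarrow> real^3"
  assumes V_C3: "Ck 3 V"
    and V_cond: "cond_U V \<or> cond_U' V"
    and rho: "admissible_rho \<rho>" and charge_nz: "charge \<rho> \<noteq> 0"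
    and eps: "\<epsilon> > 0"
    and dr: "\<And>t. t \<ge> 0 \<Longrightarrow> (r has_vector_derivative u t) (at t within {0..})"
    and du: "\<And>t. t \<ge> 0 \<Longrightarrow> (u has_vector_derivative u' t) (at t within {0..})"
    and ddu: "\<And>t. t \<ge> 0 \<Longrightarrow> (u' has_vector_derivative u'' t) (at t within {0..})"
    and eq: "\<And>t. t \<ge> 0 \<Longrightarrow>
       mass \<rho> (u t) (u' t) = - grad V (r t) + \<epsilon> *\<^sub>R acoef \<rho> (u t) (u'' t)
                              + \<epsilon> *\<^sub>R bcoef \<rho> (u t) (u' t)"
    and ubar: "\<exists>ub<1. \<forall>t\<ge>0. norm (u t) \<le> ub"
    and cbound: "\<exists>c. \<forall>t\<ge>0. norm (u' t) \<le> c"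
  shows "(u' \<longlongrightarrow> 0) at_top \<and> (u'' \<longlongrightarrow> 0) at_top
         \<and> ((\<lambda>t. grad V (r t)) \<longlongrightarrow> 0) at_top"
proof -
  obtain ub c where "ub < 1" "\<And>t. t \<ge> 0 \<Longrightarrow> norm (u t) \<le> ub" "\<And>t. t \<ge> 0 \<Longrightarrow> norm (u' t) \<le> c"
    using ubar cbound by blast
  then interpret effective_solution V \<rho> \<epsilon> r u u' u'' ub c
    using V_C3 V_cond charge_nz eps dr du ddu eq by unfold_locales auto
  show ?thesis using u'_tendsto_0 u''_tendsto_0 grad_V_tendsto_0 by blast
qed

end
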